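(* Let $n\in\mathbb{N}$, $j\in\mathbb{Z}$, let $g\in\mathcal{H}(V_j^+)$ and $\omega\in\mathbb{R}$. Then $$\Phi_n g(\omega)=i\,\operatorname{sgn}(\omega)\,\Phi_n\mathcal{H}g(\omega),$$ i.e. $i\int_{-\infty}^\infty s_n(\omega t)g(t)\,dt=i\,\operatorname{sgn}(\omega)\int_{-\infty}^\infty c_n(\omega t)(\mathcal{H}g)(t)\,dt$, where the left-hand integral is understood in the distributional sense (for $\omega\neq0$ as $\frac{1}{|\omega|}\langle s_n, g(\cdot/\omega)\rangle$, and as $0$ for $\omega=0$).
   Context: For $n\in\mathbb{N}$, $c_n(\eta)=\sum_{l\ge0}\frac{(-1)^l n}{(2n)^{2l+\frac{1}{2n}}\Gamma(l+\frac{1}{2n})l!}\eta^{2nl}$ (an even entire function), $s_n=-\mathcal{H}c_n$ where $\mathcal{H}$ is the Hilbert transform on tempered distributions (on $L^2(\mathbb{R})$: $\mathcal{H}f(x)=\frac1\pi\,\mathrm{p.v.}\int\frac{f(t)}{x-t}dt$, a unitary operator mapping even functions to odd ones and vice versa); $s_n$ is an odd function, and $\varphi_n=c_n+is_n$. The transform is $\Phi_n g(\omega)=\int\varphi_n(\omega t)g(t)\,dt$; for odd $g$ this reduces to $i\int s_n(\omega t)g(t)\,dt$, for even $g$ to $\int c_n(\omega t)g(t)\,dt$. Let $\phi=\mathbf{1}_{[0,1]}$, $\phi_{j,k}(t)=\phi(2^jt-k)$ for $j,k\in\mathbb{Z}$, $V_j$ the space of finite linear combinations of $\{\phi_{j,k}\}_{k\in\mathbb{Z}}$,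 and $V_j^+$ the subspace of even functions in $V_j$; $\mathcal{H}(V_j^+)$ is its image under $\mathcal{H}$ (odd functions). $\operatorname{sgn}(0)=0$. *)

theory Defs
  imports "HOL-Analysis.Analysis"
begin

definition cn :: "nat \<Rightarrow> real \<Rightarrow> real" where
  "cn n \<eta> = (\<Sum>l. ((-1) ^ l * real n /
      ((2 * real n) powr (2 * real l + 1 / (2 * real n)) * Gamma (real l + 1 / (2 * real n)) * fact l))
      * \<eta> ^ (2 * n * l))"

definition hilbert_trunc :: "(real \<Rightarrow> real) \<Rightarrow> real \<Rightarrow> real \<Rightarrow> real \<Rightarrow> real" where
  "hilbert_trunc f x \<epsilon> R = integral {t. \<epsilon> \<le> \<bar>x - t\<bar> \<and> \<bar>x - t\<bar> \<le> R} (\<lambda>t. f t / (x - t))"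

definition hilbert :: "(real \<Rightarrow> real) \<Rightarrow> real \<Rightarrow> real" where
  "hilbert f x = (1 / pi) * Lim (at_right 0) (\<lambda>\<epsilon>. Lim at_top (\<lambda>R. hilbert_trunc f x \<epsilon> R))"

text \<open>Hilbert transform of a (function-represented) distribution u, defined by transposition:
  <H u, phi> = - <u, H phi>.\<close>
definition dist_hilbert :: "(real \<Rightarrow> real) \<Rightarrow> (real \<Rightarrow> real) \<Rightarrow> real" where
  "dist_hilbert u \<phi> = - integral UNIV (\<lambda>t. u t * hilbert \<phi> t)"

definition sn_pair :: "nat \<Rightarrow> (real \<Rightarrow> real) \<Rightarrow> real" where
  "sn_pair n \<phi> = - dist_hilbert (cn n) \<phi>"

definition sn_integral :: "nat \<Rightarrow> (real \<Rightarrow> real) \<Rightarrow> real \<Rightarrow> real" where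
  "sn_integral n g \<omega> = (if \<omega> = 0 then 0 else sn_pair n (\<lambda>t. g (t / \<omega>)) / \<bar>\<omega>\<bar>)"

definition haar_phi :: "real \<Rightarrow> real" where
  "haar_phi t = indicator {0..1} t"

definition phi_jk :: "int \<Rightarrow> int \<Rightarrow> real \<Rightarrow> real" where
  "phi_jk j k t = haar_phi (2 powr (real_of_int j) * t - real_of_int k)"

definition V :: "int \<Rightarrow> (real \<Rightarrow> real) set" where
  "V j = {f. \<exists>K a. finite K \<and> f = (\<lambda>t. \<Sum>k\<in>K. a k * phi_jk j k t)}"

definition Vplus :: "int \<Rightarrow> (real \<Rightarrow> real) set" where
  "Vplus j = {f \<in> V j. \<forall>t. f (- t) = f t}"

end

theory Submission
  imports Defs "HOL-Real_Asymp.Real_Asymp"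
begin

text \<open>The Hilbert transform of a step function f \<in> V_j is, off finitely many points, a finite
  combination of logarithms ln |t - \<alpha>| - ln |t - \<beta>|. For such g the principal value integral
  defining (H g)(x) exists at all but finitely many x, and the dilation t \<mapsto> t / \<omega> rescales its
  truncations by the factor sgn \<omega>; hence H (g (\<cdot> / \<omega>)) = sgn \<omega> \<cdot> (H g)(\<cdot> / \<omega>) almost everywhere.
  Since s_n = - H c_n acts by transposition, \<langle>s_n, g (\<cdot> / \<omega>)\<rangle> is the integral of c_n against
  H (g (\<cdot> / \<omega>)), and the substitution t = \<omega> u gives the claim.\<close>

subsection \<open>Integrability of logarithmic singularities\<close>

lemma isCont_x_ln_abs: "isCont (\<lambda>x::real. x * ln \<bar>x\<bar>) y"
proof (cases "y = 0")
  case True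
  have "((\<lambda>x::real. x * ln \<bar>x\<bar>) \<longlongrightarrow> 0) (at_right 0)" by real_asymp
  moreover have "((\<lambda>x::real. x * ln \<bar>x\<bar>) \<longlongrightarrow> 0) (at_left 0)" by real_asymp
  ultimately have "((\<lambda>x::real. x * ln \<bar>x\<bar>) \<longlongrightarrow> 0) (at 0)"
    by (intro filterlim_split_at)
  then show ?thesis using True by (simp add: isCont_def)
next
  case False
  then show ?thesis by (intro continuous_intros) auto
qed

lemma has_real_derivative_ln_abs_diff:
  assumes "u \<noteq> c"
  shows "((\<lambda>u::real. ln \<bar>u - c\<bar>) has_real_derivative 1 / (u - c)) (at u)"
proof (cases "u > c")
  case True
  have "((\<lambda>u::real. ln (u - c)) has_real_derivative 1 / (u - c)) (at u)"
    using True by (auto intro!: derivative_eq_intros)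
  then show ?thesis
    by (rule has_field_derivative_transform_within_open[of _ _ _ "{c<..}"]) (use True in auto)
next
  case False
  with assms have "u < c" by auto
  have "((\<lambda>u::real. ln (c - u)) has_real_derivative 1 / (u - c)) (at u)"
    using \<open>u < c\<close> by (auto intro!: derivative_eq_intros simp: field_simps)
  then show ?thesis
    by (rule has_field_derivative_transform_within_open[of _ _ _ "{..<c}"]) (use \<open>u < c\<close> in auto)
qed

lemma ln_abs_diff_integrable_on: "(\<lambda>u::real. ln \<bar>u - c\<bar>) integrable_on {a..b}"
proof (cases "a \<le> b")
  case True
  define F where "F u = (u - c) * ln \<bar>u - c\<bar> - (u - c)" for u :: real
  have "(F has_vector_derivative ln \<bar>u - c\<bar>) (at u)" if "u \<noteq> c" for u
  proof -
    have "(F has_real_derivative 1 * ln \<bar>u - c\<bar> + 1 / (u - c) * (u - c) - 1) (at u)"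
      unfolding F_def
      by (intro DERIV_diff DERIV_mult has_real_derivative_ln_abs_diff that)
         (auto intro!: derivative_eq_intros)
    then show ?thesis
      using that by (simp add: has_real_derivative_iff_has_vector_derivative)
  qed
  moreover have "isCont F u" for u
  proof -
    have "isCont (\<lambda>u. (u - c) * ln \<bar>u - c\<bar>) u"
      by (rule isCont_o2[OF _ isCont_x_ln_abs]) (intro continuous_intros)
    then show ?thesis unfolding F_def by (rule continuous_diff) (intro continuous_intros)
  qed
  ultimately have "((\<lambda>u. ln \<bar>u - c\<bar>) has_integral F b - F a) {a..b}"
    using True
    by (intro fundamental_theorem_of_calculus_interior_strong[of "{c}"]
        continuous_at_imp_continuous_on) auto
  then show ?thesis by blast
next
  case False
  then show ?thesis by (simp add: integrable_on_empty)
qed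

text \<open>ln |u - c| is bounded above on {a..b} by some M, and the integrable function
  M - ln |u - c| is nonnegative, hence absolutely integrable.\<close>
lemma ln_abs_diff_absolutely_integrable_on:
  "(\<lambda>u::real. ln \<bar>u - c\<bar>) absolutely_integrable_on {a..b}"
proof -
  define M where "M = max 0 (ln (\<bar>a - c\<bar> + \<bar>b - c\<bar>))"
  have le: "ln \<bar>u - c\<bar> \<le> M" if "u \<in> {a..b}" for u
  proof (cases "u = c")
    case False
    have "\<bar>u - c\<bar> \<le> \<bar>a - c\<bar> + \<bar>b - c\<bar>" using that by auto
    then have "ln \<bar>u - c\<bar> \<le> ln (\<bar>a - c\<bar> + \<bar>b - c\<bar>)"
      using False by (subst ln_le_cancel_iff) auto
    then show ?thesis by (simp add: M_def)
  qed (simp add: M_def)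
  have "(\<lambda>u. M - ln \<bar>u - c\<bar>) integrable_on {a..b}"
    by (intro integrable_diff ln_abs_diff_integrable_on integrable_const_ivl)
  then have "(\<lambda>u. M - ln \<bar>u - c\<bar>) absolutely_integrable_on {a..b}"
    by (rule nonnegative_absolutely_integrable_1) (use le in auto)
  moreover have "(\<lambda>u::real. M) absolutely_integrable_on {a..b}"
    by (intro absolutely_integrable_continuous_real continuous_on_const)
  ultimately have "(\<lambda>u. M - (M - ln \<bar>u - c\<bar>)) absolutely_integrable_on {a..b}"
    using set_integral_diff(1) by blast
  then show ?thesis by simp
qed

lemma borel_measurable_imp_lebesgue_on:
  "(f::real \<Rightarrow> real) \<in> borel_measurable borel \<Longrightarrow> f \<in> borel_measurable (lebesgue_on S)"
  by (simp add: measurable_completion measurable_restrict_space1)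

lemma ln_abs_diff_divide_absolutely_integrable_on:
  fixes a b c :: real
  assumes "0 < a"
  shows "(\<lambda>s. ln \<bar>s - c\<bar> / s) absolutely_integrable_on {a..b}"
proof -
  have "(\<lambda>s. (1 / s) * ln \<bar>s - c\<bar>) absolutely_integrable_on {a..b}"
  proof (rule absolutely_integrable_bounded_measurable_product_real
      [OF _ _ _ ln_abs_diff_absolutely_integrable_on])
    show "(\<lambda>s::real. 1 / s) \<in> borel_measurable (lebesgue_on {a..b})"
      by (rule borel_measurable_imp_lebesgue_on) measurable
    have "norm (1 / s) \<le> 1 / a" if "s \<in> {a..b}" for s
      using that assms by (simp add: field_simps)
    then show "bounded ((\<lambda>s::real. 1 / s) ` {a..b})"
      unfolding bounded_iff by blast
  qed auto
  then show ?thesis by simp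
qed

lemma ln_abs_diff_divide_integrable_on:
  "0 < (a::real) \<Longrightarrow> (\<lambda>s. ln \<bar>s - c\<bar> / s) integrable_on {a..b}"
  using ln_abs_diff_divide_absolutely_integrable_on set_lebesgue_integral_eq_integral(1) by blast

text \<open>Substituting t = x \<mp> s turns the truncated principal value integral of ln |t - c| / (x - t)
  into minus the integral of log_kernel (x - c) over [\<epsilon>, R].\<close>
definition log_kernel :: "real \<Rightarrow> real \<Rightarrow> real" where
  "log_kernel p s = (ln \<bar>s + p\<bar> - ln \<bar>s - p\<bar>) / s"

lemma log_kernel_measurable: "log_kernel p \<in> borel_measurable (lebesgue_on S)"
  unfolding log_kernel_def by (rule borel_measurable_imp_lebesgue_on) measurable

lemma log_kernel_absolutely_integrable_on_Icc:
  assumes "0 < a"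
  shows "log_kernel p absolutely_integrable_on {a..b}"
proof -
  have "(\<lambda>s. ln \<bar>s - (-p)\<bar> / s - ln \<bar>s - p\<bar> / s) absolutely_integrable_on {a..b}"
    using assms by (intro set_integral_diff(1) ln_abs_diff_divide_absolutely_integrable_on)
  then show ?thesis by (simp add: log_kernel_def[abs_def] diff_divide_distrib)
qed

lemma log_kernel_integrable_on_Icc: "0 < a \<Longrightarrow> log_kernel p integrable_on {a..b}"
  using log_kernel_absolutely_integrable_on_Icc set_lebesgue_integral_eq_integral(1) by blast

lemma ln_diff_le_quotient:
  fixes a b :: real
  assumes "0 < b" "b \<le> a"
  shows "0 \<le> ln a - ln b" "ln a - ln b \<le> (a - b) / b"
proof -
  have "ln a - ln b = ln (a / b)" using assms by (simp add: ln_div)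
  also have "\<dots> \<le> a / b - 1" using assms by (intro ln_le_minus_one) auto
  also have "\<dots> = (a - b) / b" using assms by (simp add: field_simps)
  finally show "ln a - ln b \<le> (a - b) / b" .
  show "0 \<le> ln a - ln b" using assms by simp
qed

lemma abs_log_kernel_le_near_0:
  assumes p: "0 < p" and s: "0 \<le> s" "s \<le> p / 2"
  shows "\<bar>log_kernel p s\<bar> \<le> 4 / p"
proof (cases "s = 0")
  case False
  with s have "0 < s" by simp
  have "\<bar>s + p\<bar> = s + p" "\<bar>s - p\<bar> = p - s" using s p by auto
  moreover have D: "0 \<le> ln (s + p) - ln (p - s)" "ln (s + p) - ln (p - s) \<le> 2 * s / (p - s)"
    using ln_diff_le_quotient[of "p - s" "s + p"] s p by auto
  moreover have "2 * s / (p - s) \<le> 4 * s / p"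
    using s p mult_nonneg_nonneg[of s "p - 2 * s"] by (simp add: field_simps)
  then have "ln (s + p) - ln (p - s) \<le> 4 * s / p" using D by linarith
  then have "(ln (s + p) - ln (p - s)) / s \<le> 4 / p"
    using \<open>0 < s\<close> p by (simp add: field_simps)
  ultimately show ?thesis
    using \<open>0 < s\<close> by (simp add: log_kernel_def)
qed (use p in \<open>simp add: log_kernel_def\<close>)

lemma abs_log_kernel_le_at_infinity:
  assumes p: "0 < p" and s: "2 * p \<le> s"
  shows "\<bar>log_kernel p s\<bar> \<le> 4 * p * (1 / s ^ 2)"
proof -
  have "\<bar>s + p\<bar> = s + p" "\<bar>s - p\<bar> = s - p" using s p by auto
  moreover have D: "0 \<le> ln (s + p) - ln (s - p)" "ln (s + p) - ln (s - p) \<le> 2 * p / (s - p)"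
    using ln_diff_le_quotient[of "s - p" "s + p"] s p by auto
  moreover have "2 * p / (s - p) \<le> 4 * p / s"
    using s p by (simp add: field_simps)
  then have "(ln (s + p) - ln (s - p)) / s \<le> (4 * p / s) / s"
    using D s p by (intro divide_right_mono) auto
  ultimately show ?thesis
    using D s p by (simp add: log_kernel_def power2_eq_square)
qed

lemma log_kernel_absolutely_integrable_pos:
  assumes p: "0 < p"
  shows "log_kernel p absolutely_integrable_on {0..}"
proof -
  have "log_kernel p absolutely_integrable_on {0..p/2}"
  proof (rule measurable_bounded_by_integrable_imp_absolutely_integrable[OF log_kernel_measurable])
    show "(\<lambda>_. 4 / p) integrable_on {0..p/2}" by (rule integrable_const_ivl)
    show "norm (log_kernel p s) \<le> 4 / p" if "s \<in> {0..p/2}" for s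
      using abs_log_kernel_le_near_0[OF p] that by simp
  qed simp
  moreover have "log_kernel p absolutely_integrable_on {p/2..2*p}"
    using p by (intro log_kernel_absolutely_integrable_on_Icc) simp
  ultimately have "log_kernel p absolutely_integrable_on {0..p/2} \<union> {p/2..2*p}"
    by (rule absolutely_integrable_Un)
  moreover have "log_kernel p absolutely_integrable_on {2*p..}"
  proof (rule measurable_bounded_by_integrable_imp_absolutely_integrable[OF log_kernel_measurable])
    have "(\<lambda>s::real. 1 / s ^ 2) integrable_on {2*p..}"
      using has_integral_inverse_power_to_inf[of 2 "2*p"] p by auto
    then show "(\<lambda>s. 4 * p * (1 / s ^ 2)) integrable_on {2*p..}"
      using integrable_on_cmult_left[of "\<lambda>s::real. 1 / s ^ 2" "{2*p..}" "4 * p"] by simp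
    show "norm (log_kernel p s) \<le> 4 * p * (1 / s ^ 2)" if "s \<in> {2*p..}" for s
      using abs_log_kernel_le_at_infinity[OF p] that by simp
  qed simp
  ultimately have "log_kernel p absolutely_integrable_on {0..p/2} \<union> {p/2..2*p} \<union> {2*p..}"
    by (rule absolutely_integrable_Un)
  moreover have "{0..p/2} \<union> {p/2..2*p} \<union> {2*p..} = {0..}" using p by auto
  ultimately show ?thesis by simp
qed

lemma log_kernel_uminus: "log_kernel (-p) s = - log_kernel p s"
  by (simp add: log_kernel_def add.commute diff_divide_distrib)

lemma log_kernel_absolutely_integrable:
  assumes "p \<noteq> 0"
  shows "log_kernel p absolutely_integrable_on {0..}"
proof (cases "p > 0")
  case False
  with assms have "log_kernel (-p) absolutely_integrable_on {0..}"
    by (intro log_kernel_absolutely_integrable_pos) simp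
  then have "(\<lambda>s. (-1) * log_kernel (-p) s) absolutely_integrable_on {0..}"
    by (rule set_integrable_mult_right)
  then show ?thesis by (simp add: log_kernel_uminus)
qed (rule log_kernel_absolutely_integrable_pos)

lemma log_kernel_set_integrable:
  assumes "p \<noteq> 0" "S \<in> sets lebesgue" "S \<subseteq> {0..}"
  shows "set_integrable lebesgue S (log_kernel p)"
  using set_integrable_subset[OF log_kernel_absolutely_integrable] assms by blast

lemma tendsto_integral_log_kernel_at_top:
  assumes p: "p \<noteq> 0" and a: "0 \<le> a"
  shows "((\<lambda>R. integral {a..R} (log_kernel p)) \<longlongrightarrow> integral {a..} (log_kernel p)) at_top"
proof -
  have A: "set_integrable lebesgue {a..} (log_kernel p)"
    using a by (intro log_kernel_set_integrable[OF p]) auto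
  have B: "set_integrable lebesgue {a..R} (log_kernel p)" for R
    using a by (intro log_kernel_set_integrable[OF p]) auto
  have "((\<lambda>R. set_lebesgue_integral lebesgue {a..R} (log_kernel p))
          \<longlongrightarrow> set_lebesgue_integral lebesgue {a..} (log_kernel p)) at_top"
    by (rule tendsto_set_lebesgue_integral_at_top) (auto simp: A)
  then show ?thesis
    by (simp add: set_lebesgue_integral_eq_integral(2)[OF A] set_lebesgue_integral_eq_integral(2)[OF B])
qed

lemma tendsto_integral_log_kernel_at_right_0:
  assumes p: "p \<noteq> 0"
  shows "((\<lambda>e. integral {e..} (log_kernel p)) \<longlongrightarrow> integral {0..} (log_kernel p)) (at_right 0)"
proof -
  have int_Icc: "(log_kernel p has_integral integral {0..e} (log_kernel p)) {0..e}" for e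
    using set_lebesgue_integral_eq_integral(1)[OF log_kernel_set_integrable[OF p, of "{0..e}"]] by auto
  have int_Ici: "(log_kernel p has_integral integral {e..} (log_kernel p)) {e..}" if "0 \<le> e" for e
    using set_lebesgue_integral_eq_integral(1)[OF log_kernel_set_integrable[OF p, of "{e..}"]] that
    by auto
  have split: "integral {0..} (log_kernel p) = integral {0..e} (log_kernel p) + integral {e..} (log_kernel p)"
    if "0 \<le> e" for e
  proof -
    have "(log_kernel p has_integral integral {0..e} (log_kernel p) + integral {e..} (log_kernel p))
            ({0..e} \<union> {e..})"
      by (rule has_integral_Un[OF int_Icc int_Ici[OF that]]) (auto intro: negligible_subset[of "{e}"])
    moreover have "{0..e} \<union> {e..} = {0::real..}" using that by auto
    ultimately show ?thesis by (simp add: integral_unique)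
  qed
  have "continuous_on {0..1} (\<lambda>x. integral {0..x} (log_kernel p))"
    using int_Icc by (intro indefinite_integral_continuous_1) blast
  then have "((\<lambda>x. integral {0..x} (log_kernel p)) \<longlongrightarrow> integral {0..0} (log_kernel p)) (at_right 0)"
    by (rule continuous_on_Icc_at_rightD) simp
  then have "((\<lambda>x. integral {0..} (log_kernel p) - integral {0..x} (log_kernel p))
               \<longlongrightarrow> integral {0..} (log_kernel p) - 0) (at_right 0)"
    by (intro tendsto_intros) simp
  moreover have "\<forall>\<^sub>F x in at_right 0.
      integral {0..} (log_kernel p) - integral {0..x} (log_kernel p) = integral {x..} (log_kernel p)"
    using eventually_at_right_less[of 0]
  proof eventually_elim
    case (elim x)
    then show ?case using split[of x] by linarith
  qed
  ultimately show ?thesis by (simp add: Lim_transform_eventually)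
qed

subsection \<open>Hilbert transforms of step functions\<close>

lemma has_integral_inverse_diff:
  fixes u v y :: real
  assumes "u \<le> v" "y \<notin> {u..v}"
  shows "((\<lambda>t. 1 / (y - t)) has_integral (ln \<bar>y - u\<bar> - ln \<bar>y - v\<bar>)) {u..v}"
proof -
  have "((\<lambda>t. 1 / (y - t)) has_integral (- ln \<bar>v - y\<bar>) - (- ln \<bar>u - y\<bar>)) {u..v}"
  proof (rule fundamental_theorem_of_calculus[OF assms(1)])
    fix x assume "x \<in> {u..v}"
    then have "x \<noteq> y" using assms by auto
    then have "((\<lambda>t. - ln \<bar>t - y\<bar>) has_real_derivative - (1 / (x - y))) (at x)"
      by (intro DERIV_minus has_real_derivative_ln_abs_diff)
    then show "((\<lambda>t. - ln \<bar>t - y\<bar>) has_vector_derivative 1 / (y - x)) (at x within {u..v})"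
      by (auto simp: has_real_derivative_iff_has_vector_derivative minus_divide_right
          intro: has_vector_derivative_at_within)
  qed
  then show ?thesis by (simp add: abs_minus_commute)
qed

lemma has_integral_indicator_over_annulus:
  fixes \<alpha> \<beta> y e R :: real
  assumes "\<alpha> < \<beta>" and e: "0 < e" "e < \<bar>y - \<alpha>\<bar>" "e < \<bar>y - \<beta>\<bar>"
    and R: "\<bar>y - \<alpha>\<bar> \<le> R" "\<bar>y - \<beta>\<bar> \<le> R"
  shows "((\<lambda>t. indicator {\<alpha>..\<beta>} t / (y - t)) has_integral (ln \<bar>y - \<alpha>\<bar> - ln \<bar>y - \<beta>\<bar>))
           {t. e \<le> \<bar>y - t\<bar> \<and> \<bar>y - t\<bar> \<le> R}"
proof -
  let ?A = "{t. e \<le> \<bar>y - t\<bar> \<and> \<bar>y - t\<bar> \<le> R}"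
  have main: "((\<lambda>t. 1 / (y - t)) has_integral (ln \<bar>y - \<alpha>\<bar> - ln \<bar>y - \<beta>\<bar>)) ({\<alpha>..\<beta>} \<inter> ?A)"
  proof (cases "y < \<alpha> \<or> y > \<beta>")
    case True
    then have "{\<alpha>..\<beta>} \<inter> ?A = {\<alpha>..\<beta>}" using e R \<open>\<alpha> < \<beta>\<close> by auto
    then show ?thesis using has_integral_inverse_diff[of \<alpha> \<beta> y] True \<open>\<alpha> < \<beta>\<close> by auto
  next
    case False
    then have y: "\<alpha> < y" "y < \<beta>" using e by auto
    have "((\<lambda>t. 1 / (y - t)) has_integral (ln \<bar>y - \<alpha>\<bar> - ln e) + (ln e - ln \<bar>y - \<beta>\<bar>))
            ({\<alpha>..y - e} \<union> {y + e..\<beta>})"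
      using has_integral_inverse_diff[of \<alpha> "y - e" y] has_integral_inverse_diff[of "y + e" \<beta> y] e y
      by (intro has_integral_Un) auto
    moreover have "{\<alpha>..\<beta>} \<inter> ?A = {\<alpha>..y - e} \<union> {y + e..\<beta>}" using y e R by auto
    ultimately show ?thesis by simp
  qed
  have eq: "(\<lambda>t. indicator {\<alpha>..\<beta>} t / (y - t)) = (\<lambda>t. if t \<in> {\<alpha>..\<beta>} then 1 / (y - t) else 0)"
    by (auto simp: indicator_def)
  show ?thesis unfolding eq has_integral_restrict_Int by (rule main)
qed

lemma Lim_eventually_eq_const:
  assumes "F \<noteq> bot" "eventually (\<lambda>x. f x = (c::real)) F"
  shows "Lim F f = c"
  using assms by (intro tendsto_Lim tendsto_eventually) auto

text \<open>Away from the jump points the truncations are eventually constant in both \<epsilon> and R.\<close>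
lemma hilbert_indicator_sum:
  fixes a \<alpha> \<beta> :: "'a \<Rightarrow> real"
  assumes K: "finite K" and "\<forall>k\<in>K. \<alpha> k < \<beta> k" and y: "\<forall>k\<in>K. y \<noteq> \<alpha> k \<and> y \<noteq> \<beta> k"
  shows "hilbert (\<lambda>t. \<Sum>k\<in>K. a k * indicator {\<alpha> k..\<beta> k} t) y
         = (1 / pi) * (\<Sum>k\<in>K. a k * (ln \<bar>y - \<alpha> k\<bar> - ln \<bar>y - \<beta> k\<bar>))"
proof -
  define S where "S = (\<Sum>k\<in>K. a k * (ln \<bar>y - \<alpha> k\<bar> - ln \<bar>y - \<beta> k\<bar>))"
  define f where "f t = (\<Sum>k\<in>K. a k * indicator {\<alpha> k..\<beta> k} t :: real)" for t
  have trunc: "hilbert_trunc f y e R = S"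
    if e: "0 < e" "\<forall>k\<in>K. e < \<bar>y - \<alpha> k\<bar> \<and> e < \<bar>y - \<beta> k\<bar>"
      and R: "\<forall>k\<in>K. \<bar>y - \<alpha> k\<bar> \<le> R \<and> \<bar>y - \<beta> k\<bar> \<le> R" for e R
  proof -
    have "((\<lambda>t. \<Sum>k\<in>K. a k * (indicator {\<alpha> k..\<beta> k} t / (y - t))) has_integral S)
            {t. e \<le> \<bar>y - t\<bar> \<and> \<bar>y - t\<bar> \<le> R}"
      unfolding S_def using assms e R
      by (intro has_integral_sum K has_integral_mult_right has_integral_indicator_over_annulus) auto
    then show ?thesis
      unfolding hilbert_trunc_def f_def by (simp add: integral_unique sum_divide_distrib)
  qed
  have "\<forall>\<^sub>F R in at_top. \<forall>k\<in>K. \<bar>y - \<alpha> k\<bar> \<le> R \<and> \<bar>y - \<beta> k\<bar> \<le> R"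
    using K by (intro eventually_ball_finite ballI eventually_conj eventually_ge_at_top) auto
  then have lim_R: "Lim at_top (\<lambda>R. hilbert_trunc f y e R) = S"
    if "0 < e" "\<forall>k\<in>K. e < \<bar>y - \<alpha> k\<bar> \<and> e < \<bar>y - \<beta> k\<bar>" for e
    by (intro Lim_eventually_eq_const, simp, elim eventually_mono) (rule trunc[OF that])
  have "\<forall>\<^sub>F e in at_right 0. e < \<bar>y - \<alpha> k\<bar> \<and> e < \<bar>y - \<beta> k\<bar>" if "k \<in> K" for k
  proof -
    have "0 < \<bar>y - \<alpha> k\<bar>" "0 < \<bar>y - \<beta> k\<bar>" using y that by auto
    then show ?thesis by (intro eventually_conj order_tendstoD(2)[OF tendsto_ident_at])
  qed
  then have "\<forall>\<^sub>F e in at_right 0. \<forall>k\<in>K. e < \<bar>y - \<alpha> k\<bar> \<and> e < \<bar>y - \<beta> k\<bar>"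
    by (intro eventually_ball_finite[OF K] ballI)
  then have "\<forall>\<^sub>F e in at_right 0. Lim at_top (\<lambda>R. hilbert_trunc f y e R) = S"
    using eventually_at_right_less[of 0] by eventually_elim (rule lim_R)
  then show ?thesis
    unfolding hilbert_def S_def[symmetric] f_def[symmetric] by (simp add: Lim_eventually_eq_const)
qed

subsection \<open>Principal values of logarithms\<close>

lemma has_integral_ln_abs_over_annulus:
  fixes x c e R :: real
  assumes e: "0 < e" "e \<le> R"
  shows "((\<lambda>t. ln \<bar>t - c\<bar> / (x - t)) has_integral - integral {e..R} (log_kernel (x - c)))
           {t. e \<le> \<bar>x - t\<bar> \<and> \<bar>x - t\<bar> \<le> R}"
proof -
  define p where "p = x - c"
  define f where "f t = ln \<bar>t - c\<bar> / (x - t)" for t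
  define I1 where "I1 = integral {e..R} (\<lambda>s. - (ln \<bar>s - (-p)\<bar> / s))"
  define I2 where "I2 = integral {e..R} (\<lambda>s. ln \<bar>s - p\<bar> / s)"
  have h1: "((\<lambda>s. - (ln \<bar>s - (-p)\<bar> / s)) has_integral I1) {e..R}"
    unfolding I1_def by (intro integrable_integral integrable_neg ln_abs_diff_divide_integrable_on e)
  have h2: "((\<lambda>s. ln \<bar>s - p\<bar> / s) has_integral I2) {e..R}"
    unfolding I2_def by (intro integrable_integral ln_abs_diff_divide_integrable_on e)
  have "f \<circ> (+) x = (\<lambda>s. - (ln \<bar>s - (-p)\<bar> / s))"
    by (auto simp: f_def p_def algebra_simps)
  then have right: "(f has_integral I1) {e + x..R + x}"
    using h1 has_integral_shift_Icc_real[of f x I1 e R] by simp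
  have "(\<lambda>s. (f \<circ> (+) x) (- s)) = (\<lambda>s. ln \<bar>s - p\<bar> / s)"
    by (auto simp: f_def p_def algebra_simps abs_minus_commute)
  then have "((f \<circ> (+) x) has_integral I2) {-R..-e}"
    using h2 has_integral_reflect_real[of "f \<circ> (+) x" I2 "-e" "-R"] by simp
  then have left: "(f has_integral I2) {-R + x..-e + x}"
    using has_integral_shift_Icc_real[of f x I2 "-R" "-e"] by simp
  have "(f has_integral I2 + I1) ({-R + x..-e + x} \<union> {e + x..R + x})"
    by (rule has_integral_Un[OF left right]) (use e in auto)
  moreover have "{-R + x..-e + x} \<union> {e + x..R + x} = {t. e \<le> \<bar>x - t\<bar> \<and> \<bar>x - t\<bar> \<le> R}"
    using e by auto
  moreover have "I1 + I2 = - integral {e..R} (log_kernel p)"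
  proof (rule has_integral_unique)
    have "(\<lambda>s. - (ln \<bar>s - (-p)\<bar> / s) + ln \<bar>s - p\<bar> / s) = (\<lambda>s. - log_kernel p s)"
      by (auto simp: log_kernel_def diff_divide_distrib)
    then show "((\<lambda>s. - log_kernel p s) has_integral I1 + I2) {e..R}"
      using has_integral_add[OF h1 h2] by simp
    show "((\<lambda>s. - log_kernel p s) has_integral - integral {e..R} (log_kernel p)) {e..R}"
      by (intro has_integral_neg integrable_integral log_kernel_integrable_on_Icc e)
  qed
  ultimately show ?thesis unfolding f_def p_def by (simp add: add.commute)
qed

text \<open>Lim is an unspecified value when the limit does not exist; this predicate asserts that
  both limits in the definition of hilbert exist.\<close>
definition hilbert_pv_converges :: "(real \<Rightarrow> real) \<Rightarrow> real \<Rightarrow> bool" where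
  "hilbert_pv_converges g x \<longleftrightarrow> (\<exists>L M. (\<forall>e>0. ((\<lambda>R. hilbert_trunc g x e R) \<longlongrightarrow> L e) at_top)
                                      \<and> (L \<longlongrightarrow> M) (at_right 0))"

lemma hilbert_pv_converges_log_sum:
  fixes a \<alpha> \<beta> :: "'a \<Rightarrow> real"
  assumes K: "finite K" and E: "finite E"
    and g: "\<And>t. t \<notin> E \<Longrightarrow> g t = (1 / pi) * (\<Sum>k\<in>K. a k * (ln \<bar>t - \<alpha> k\<bar> - ln \<bar>t - \<beta> k\<bar>))"
    and x: "\<forall>k\<in>K. x \<noteq> \<alpha> k \<and> x \<noteq> \<beta> k"
  shows "hilbert_pv_converges g x"
proof -
  define T where "T e R = (1 / pi) * (\<Sum>k\<in>K. a k *
      (- integral {e..R} (log_kernel (x - \<alpha> k)) - - integral {e..R} (log_kernel (x - \<beta> k))))" for e R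
  define L where "L e = (1 / pi) * (\<Sum>k\<in>K. a k *
      (- integral {e..} (log_kernel (x - \<alpha> k)) - - integral {e..} (log_kernel (x - \<beta> k))))" for e
  have x': "x - \<alpha> k \<noteq> 0" "x - \<beta> k \<noteq> 0" if "k \<in> K" for k using x that by auto
  have trunc: "hilbert_trunc g x e R = T e R" if e: "0 < e" "e \<le> R" for e R
  proof -
    let ?A = "{t. e \<le> \<bar>x - t\<bar> \<and> \<bar>x - t\<bar> \<le> R}"
    let ?G = "\<lambda>t. (1 / pi) * (\<Sum>k\<in>K. a k * (ln \<bar>t - \<alpha> k\<bar> / (x - t) - ln \<bar>t - \<beta> k\<bar> / (x - t)))"
    have "(?G has_integral T e R) ?A"
      unfolding T_def
      by (intro has_integral_mult_right has_integral_sum K has_integral_diff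
          has_integral_ln_abs_over_annulus e)
    moreover have "g t / (x - t) = ?G t" if "t \<in> ?A - E" for t
      using g[of t] that by (simp add: sum_divide_distrib diff_divide_distrib algebra_simps)
    ultimately have "((\<lambda>t. g t / (x - t)) has_integral T e R) ?A"
      by (rule has_integral_spike_finite[OF E, rotated])
    then show ?thesis unfolding hilbert_trunc_def by (rule integral_unique)
  qed
  have "((\<lambda>R. hilbert_trunc g x e R) \<longlongrightarrow> L e) at_top" if "0 < e" for e
  proof (rule Lim_transform_eventually)
    show "((\<lambda>R. T e R) \<longlongrightarrow> L e) at_top"
      unfolding T_def L_def using that x' by (intro tendsto_intros tendsto_integral_log_kernel_at_top) auto
    show "\<forall>\<^sub>F R in at_top. T e R = hilbert_trunc g x e R"
      using eventually_ge_at_top[of e] by eventually_elim (use trunc that in auto)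
  qed
  moreover have "(L \<longlongrightarrow> L 0) (at_right 0)"
    unfolding L_def using x' by (intro tendsto_intros tendsto_integral_log_kernel_at_right_0) auto
  ultimately show ?thesis unfolding hilbert_pv_converges_def by blast
qed

subsection \<open>Dilations\<close>

lemma image_divide_Icc_min_max:
  fixes m a b :: real
  assumes "m \<noteq> 0" "a \<le> b"
  shows "(\<lambda>x. x / m) ` {min (m * a) (m * b)..max (m * a) (m * b)} = {a..b}"
proof (cases "m > 0")
  case True
  then have "m * a \<le> m * b" using assms by simp
  then show ?thesis
    using image_affinity_atLeastAtMost_div[of m 0 "m * a" "m * b"] True by simp
next
  case False
  with assms have "m < 0" by simp
  then have "m * b \<le> m * a" using assms by simp
  then show ?thesis
    using image_affinity_atLeastAtMost_div[of m 0 "m * b" "m * a"] \<open>m < 0\<close> by simp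
qed

lemma has_integral_dilation_UNIV:
  fixes f :: "real \<Rightarrow> real"
  assumes m: "m \<noteq> 0" and f: "(f has_integral i) UNIV"
  shows "((\<lambda>x. f (m * x)) has_integral i / \<bar>m\<bar>) UNIV"
proof -
  from f have fi: "\<And>a b. f integrable_on {a..b}"
    and fl: "\<And>e. e > 0 \<Longrightarrow> \<exists>B>0. \<forall>a b. ball 0 B \<subseteq> {a..b} \<longrightarrow> \<bar>integral {a..b} f - i\<bar> < e"
    using has_integral_alt'[of f i UNIV] by auto
  define c where "c a b = min (m * a) (m * b)" for a b
  define d where "d a b = max (m * a) (m * b)" for a b
  have stretch: "(\<lambda>x. f (m * x)) integrable_on {a..b} \<and>
      integral {a..b} (\<lambda>x. f (m * x)) = integral {c a b..d a b} f / \<bar>m\<bar>" if "a \<le> b" for a b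
    using integrable_stretch_real[OF fi[of "c a b" "d a b"] m] integral_stretch_real[OF m, of "c a b" "d a b" f]
      image_divide_Icc_min_max[OF m that]
    by (simp add: c_def d_def)
  show ?thesis
    unfolding has_integral_alt'[of _ _ UNIV]
  proof (intro conjI allI impI)
    show "(\<lambda>x. if x \<in> UNIV then f (m * x) else 0) integrable_on cbox a b" for a b
      using stretch[of a b] by (cases "a \<le> b") (auto simp: integrable_on_empty)
    fix e :: real assume "e > 0"
    with m obtain B where B: "B > 0" "\<And>a b. ball 0 B \<subseteq> {a..b} \<Longrightarrow> \<bar>integral {a..b} f - i\<bar> < e * \<bar>m\<bar>"
      using fl[of "e * \<bar>m\<bar>"] by auto
    show "\<exists>B>0. \<forall>a b. ball 0 B \<subseteq> cbox a b \<longrightarrow>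
            norm (integral (cbox a b) (\<lambda>x. if x \<in> UNIV then f (m * x) else 0) - i / \<bar>m\<bar>) < e"
    proof (intro exI[of _ "B / \<bar>m\<bar>"] conjI allI impI)
      show "B / \<bar>m\<bar> > 0" using B m by simp
      fix a b :: real assume sub: "ball 0 (B / \<bar>m\<bar>) \<subseteq> cbox a b"
      then have "0 \<in> cbox a b" using centre_in_ball[of 0 "B / \<bar>m\<bar>"] \<open>B / \<bar>m\<bar> > 0\<close> by blast
      then have "a \<le> b" by simp
      have "ball 0 B \<subseteq> {c a b..d a b}"
      proof
        fix y :: real assume "y \<in> ball 0 B"
        then have "y / m \<in> ball 0 (B / \<bar>m\<bar>)"
          using m by (simp add: divide_strict_right_mono)
        then have "y / m \<in> {a..b}" using sub by (metis subsetD cbox_interval)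
        then show "y \<in> {c a b..d a b}"
          using m by (cases "m > 0") (auto simp: c_def d_def field_simps)
      qed
      then show "norm (integral (cbox a b) (\<lambda>x. if x \<in> UNIV then f (m * x) else 0) - i / \<bar>m\<bar>) < e"
        using B(2) stretch[OF \<open>a \<le> b\<close>] m by (simp add: diff_divide_distrib[symmetric] field_simps)
    qed
  qed
qed

lemma integral_dilation_UNIV:
  fixes f :: "real \<Rightarrow> real"
  assumes m: "m \<noteq> 0"
  shows "integral UNIV (\<lambda>x. f (m * x)) = integral UNIV f / \<bar>m\<bar>"
proof (cases "f integrable_on UNIV")
  case True
  then show ?thesis using has_integral_dilation_UNIV[OF m] integral_unique by blast
next
  case False
  have "\<not> (\<lambda>x. f (m * x)) integrable_on UNIV"
  proof
    assume "(\<lambda>x. f (m * x)) integrable_on UNIV"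
    then obtain i where "((\<lambda>x. f (m * x)) has_integral i) UNIV" by blast
    from has_integral_dilation_UNIV[OF _ this, of "1 / m"] m
    have "f integrable_on UNIV" by auto
    with False show False by simp
  qed
  with False show ?thesis by (simp add: not_integrable_integral)
qed

lemma hilbert_trunc_dilation:
  fixes g :: "real \<Rightarrow> real"
  assumes w: "w \<noteq> 0"
  shows "hilbert_trunc (\<lambda>s. g (s / w)) t e R = sgn w * hilbert_trunc g (t / w) (e / \<bar>w\<bar>) (R / \<bar>w\<bar>)"
proof -
  define S where "S = {s. e \<le> \<bar>t - s\<bar> \<and> \<bar>t - s\<bar> \<le> R}"
  define S' where "S' = {u. e / \<bar>w\<bar> \<le> \<bar>t / w - u\<bar> \<and> \<bar>t / w - u\<bar> \<le> R / \<bar>w\<bar>}"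
  define k where "k u = (if u \<in> S' then g u / (t / w - u) else 0)" for u
  have mem: "s \<in> S \<longleftrightarrow> s / w \<in> S'" for s
  proof -
    have "\<bar>t - s\<bar> = \<bar>w\<bar> * \<bar>t / w - s / w\<bar>"
      using w by (simp add: abs_mult[symmetric] right_diff_distrib)
    then show ?thesis
      unfolding S_def S'_def using w by (simp add: pos_divide_le_eq pos_le_divide_eq mult.commute)
  qed
  have dilate: "(\<lambda>s. if s \<in> S then g (s / w) / (t - s) else 0) = (\<lambda>s. (1 / w) * k ((1 / w) * s))"
  proof
    fix s
    have "t - s = w * (t / w - s / w)" using w by (simp add: right_diff_distrib)
    then show "(if s \<in> S then g (s / w) / (t - s) else 0) = (1 / w) * k ((1 / w) * s)"
      unfolding k_def using mem[of s] by simp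
  qed
  have "hilbert_trunc (\<lambda>s. g (s / w)) t e R = integral UNIV (\<lambda>s. if s \<in> S then g (s / w) / (t - s) else 0)"
    unfolding integral_restrict_UNIV by (simp add: hilbert_trunc_def S_def)
  also have "\<dots> = (1 / w) * integral UNIV (\<lambda>s. k ((1 / w) * s))"
    unfolding dilate by simp
  also have "\<dots> = (1 / w) * (integral UNIV k / \<bar>1 / w\<bar>)"
    using integral_dilation_UNIV[of "1 / w" k] w by simp
  also have "integral UNIV k = hilbert_trunc g (t / w) (e / \<bar>w\<bar>) (R / \<bar>w\<bar>)"
    unfolding k_def integral_restrict_UNIV by (simp add: hilbert_trunc_def S'_def)
  finally show ?thesis
    using w by (cases "w > 0") (auto simp: sgn_real_def)
qed

lemma hilbert_dilation:
  fixes g :: "real \<Rightarrow> real"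
  assumes w: "w \<noteq> 0" and "hilbert_pv_converges g (t / w)"
  shows "hilbert (\<lambda>s. g (s / w)) t = sgn w * hilbert g (t / w)"
proof -
  obtain L M where L: "\<And>e. e > 0 \<Longrightarrow> ((\<lambda>R. hilbert_trunc g (t / w) e R) \<longlongrightarrow> L e) at_top"
    and M: "(L \<longlongrightarrow> M) (at_right 0)"
    using assms(2) unfolding hilbert_pv_converges_def by blast
  have "\<bar>w\<bar> > 0" using w by simp
  have "filterlim (\<lambda>R. R / \<bar>w\<bar>) at_top at_top"
    unfolding filterlim_at_top
  proof
    fix Z :: real
    show "\<forall>\<^sub>F R in at_top. Z \<le> R / \<bar>w\<bar>"
      using eventually_ge_at_top[of "Z * \<bar>w\<bar>"]
      by eventually_elim (use \<open>\<bar>w\<bar> > 0\<close> in \<open>simp add: pos_le_divide_eq\<close>)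
  qed
  have lim_R: "((\<lambda>R. hilbert_trunc (\<lambda>s. g (s / w)) t e R) \<longlongrightarrow> sgn w * L (e / \<bar>w\<bar>)) at_top"
    if "e > 0" for e
  proof -
    have "((\<lambda>R. hilbert_trunc g (t / w) (e / \<bar>w\<bar>) (R / \<bar>w\<bar>)) \<longlongrightarrow> L (e / \<bar>w\<bar>)) at_top"
      using L \<open>\<bar>w\<bar> > 0\<close> that by (intro filterlim_compose[OF _ \<open>filterlim _ at_top at_top\<close>]) simp
    then show ?thesis
      unfolding hilbert_trunc_dilation[OF w] by (rule tendsto_mult_left)
  qed
  have "filterlim (\<lambda>e. e / \<bar>w\<bar>) (at_right 0) (at_right 0)"
  proof (rule tendsto_imp_filterlim_at_right)
    have "((\<lambda>e::real. e / \<bar>w\<bar>) \<longlongrightarrow> 0 / \<bar>w\<bar>) (at_right 0)"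
      by (intro tendsto_intros) (use w in auto)
    then show "((\<lambda>e::real. e / \<bar>w\<bar>) \<longlongrightarrow> 0) (at_right 0)" by simp
    show "\<forall>\<^sub>F e in at_right 0. e / \<bar>w\<bar> > 0"
      using eventually_at_right_less[of 0] by eventually_elim (use \<open>\<bar>w\<bar> > 0\<close> in simp)
  qed
  then have "((\<lambda>e. sgn w * L (e / \<bar>w\<bar>)) \<longlongrightarrow> sgn w * M) (at_right 0)"
    by (intro tendsto_mult_left filterlim_compose[OF M])
  moreover have "\<forall>\<^sub>F e in at_right 0.
      sgn w * L (e / \<bar>w\<bar>) = Lim at_top (\<lambda>R. hilbert_trunc (\<lambda>s. g (s / w)) t e R)"
    using eventually_at_right_less[of 0]
    by eventually_elim (metis lim_R tendsto_Lim trivial_limit_at_top_linorder)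
  ultimately have "((\<lambda>e. Lim at_top (\<lambda>R. hilbert_trunc (\<lambda>s. g (s / w)) t e R)) \<longlongrightarrow> sgn w * M)
      (at_right 0)"
    by (rule Lim_transform_eventually)
  moreover have "((\<lambda>e. Lim at_top (\<lambda>R. hilbert_trunc g (t / w) e R)) \<longlongrightarrow> M) (at_right 0)"
  proof (rule Lim_transform_eventually[OF M])
    show "\<forall>\<^sub>F e in at_right 0. L e = Lim at_top (\<lambda>R. hilbert_trunc g (t / w) e R)"
      using eventually_at_right_less[of 0]
      by eventually_elim (metis L tendsto_Lim trivial_limit_at_top_linorder)
  qed
  ultimately show ?thesis
    unfolding hilbert_def by (simp add: tendsto_Lim)
qed

lemma sn_integral_eq_sgn_integral:
  fixes g :: "real \<Rightarrow> real"
  assumes w: "w \<noteq> 0" and E: "finite E"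
    and dil: "\<And>t. t / w \<notin> E \<Longrightarrow> hilbert (\<lambda>s. g (s / w)) t = sgn w * hilbert g (t / w)"
  shows "sn_integral n g w = sgn w * integral UNIV (\<lambda>t. cn n (w * t) * hilbert g t)"
proof -
  define h where "h u = cn n (w * u) * hilbert g u" for u
  have "integral UNIV (\<lambda>t. cn n t * hilbert (\<lambda>s. g (s / w)) t)
      = integral UNIV (\<lambda>t. sgn w * h ((1 / w) * t))"
  proof (rule integral_spike[of "(\<lambda>u. w * u) ` E"])
    show "negligible ((\<lambda>u. w * u) ` E)" using E by auto
    fix t assume "t \<in> UNIV - (\<lambda>u. w * u) ` E"
    then have "t / w \<notin> E" using w by (auto simp: image_iff)
    then show "sgn w * h (1 / w * t) = cn n t * hilbert (\<lambda>s. g (s / w)) t"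
      using w by (simp add: dil h_def)
  qed
  also have "\<dots> = sgn w * \<bar>w\<bar> * integral UNIV h"
    using integral_dilation_UNIV[of "1 / w" h] w by simp
  finally show ?thesis
    using w unfolding sn_integral_def sn_pair_def dist_hilbert_def h_def by simp
qed

lemma phi_jk_eq_indicator:
  "phi_jk j k = indicator {real_of_int k / 2 powr real_of_int j .. (real_of_int k + 1) / 2 powr real_of_int j}"
proof
  fix t
  have "(0 \<le> 2 powr real_of_int j * t - real_of_int k \<and> 2 powr real_of_int j * t - real_of_int k \<le> 1) \<longleftrightarrow>
        (real_of_int k / 2 powr real_of_int j \<le> t \<and> t \<le> (real_of_int k + 1) / 2 powr real_of_int j)"
    by (simp add: pos_divide_le_eq pos_le_divide_eq algebra_simps)
  then show "phi_jk j k t = indicator {real_of_int k / 2 powr real_of_int j .. (real_of_int k + 1) / 2 powr real_of_int j} t"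
    unfolding phi_jk_def haar_phi_def by (simp add: indicator_def)
qed

lemma hilbert_V_eq_log_sum:
  assumes "f \<in> V j"
  obtains K :: "int set" and a \<alpha> \<beta> :: "int \<Rightarrow> real" and E :: "real set"
  where "finite K" "finite E" "\<And>x. x \<notin> E \<Longrightarrow> \<forall>k\<in>K. x \<noteq> \<alpha> k \<and> x \<noteq> \<beta> k"
    "\<And>t. t \<notin> E \<Longrightarrow> hilbert f t = (1 / pi) * (\<Sum>k\<in>K. a k * (ln \<bar>t - \<alpha> k\<bar> - ln \<bar>t - \<beta> k\<bar>))"
proof -
  obtain K a where K: "finite K" and f: "f = (\<lambda>t. \<Sum>k\<in>K. a k * phi_jk j k t)"
    using assms unfolding V_def by auto
  define \<alpha> where "\<alpha> k = real_of_int k / 2 powr real_of_int j" for k :: int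
  define \<beta> where "\<beta> k = (real_of_int k + 1) / 2 powr real_of_int j" for k :: int
  define E where "E = \<alpha> ` K \<union> \<beta> ` K"
  have ends: "\<forall>k\<in>K. x \<noteq> \<alpha> k \<and> x \<noteq> \<beta> k" if "x \<notin> E" for x
    using that by (auto simp: E_def)
  have "f = (\<lambda>t. \<Sum>k\<in>K. a k * indicator {\<alpha> k..\<beta> k} t)"
    unfolding f \<alpha>_def \<beta>_def by (simp add: phi_jk_eq_indicator)
  then have log: "hilbert f t = (1 / pi) * (\<Sum>k\<in>K. a k * (ln \<bar>t - \<alpha> k\<bar> - ln \<bar>t - \<beta> k\<bar>))" if "t \<notin> E" for t
    using K ends[OF that]
    by (simp only:) (intro hilbert_indicator_sum; auto simp: \<alpha>_def \<beta>_def divide_strict_right_mono)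
  have "finite E" using K by (simp add: E_def)
  show ?thesis by (rule that[OF K \<open>finite E\<close> ends log])
qed

theorem proposition2:
  fixes n :: nat and j :: int and g :: "real \<Rightarrow> real" and \<omega> :: real
  assumes "n \<ge> 1"
    and "g \<in> hilbert ` Vplus j"
  shows "\<i> * complex_of_real (sn_integral n g \<omega>)
         = \<i> * complex_of_real (sgn \<omega>) * complex_of_real (integral UNIV (\<lambda>t. cn n (\<omega> * t) * hilbert g t))"
proof -
  obtain f where f: "f \<in> V j" and g: "g = hilbert f"
    using assms(2) unfolding Vplus_def by auto
  obtain K :: "int set" and a \<alpha> \<beta> :: "int \<Rightarrow> real" and E where K: "finite K" and E: "finite E"
    and ends: "\<And>x. x \<notin> E \<Longrightarrow> \<forall>k\<in>K. x \<noteq> \<alpha> k \<and> x \<noteq> \<beta> k"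
    and f_log: "\<And>t. t \<notin> E \<Longrightarrow> hilbert f t = (1 / pi) * (\<Sum>k\<in>K. a k * (ln \<bar>t - \<alpha> k\<bar> - ln \<bar>t - \<beta> k\<bar>))"
    by (rule hilbert_V_eq_log_sum[OF f]) blast
  have "sn_integral n g \<omega> = sgn \<omega> * integral UNIV (\<lambda>t. cn n (\<omega> * t) * hilbert g t)"
  proof (cases "\<omega> = 0")
    case False
    show ?thesis
      using False E
      by (rule sn_integral_eq_sgn_integral)
         (intro hilbert_dilation False hilbert_pv_converges_log_sum[OF K E f_log[folded g] ends])
  qed (simp add: sn_integral_def)
  then show ?thesis by simp
qed

end
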